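(* Let $\mathcal H$ be a family of graphs. The following are equivalent: (i) there are constants $c_1=c_1(\mathcal H)$ and $c_2=c_2(\mathcal H)$ such that every $\mathcal H$-free graph $G$ has fewer than $c_2$ vertices $v$ with $\mathrm{sdeg}(v)\ge c_1$; (ii) there is a positive integer $n$ such that $\mathcal H\le\{nK_{1,n},\ G_n\}$.
   Context: All graphs are finite, simple, undirected. For graphs $H_1,H_2$, write $H_1\prec H_2$ if $H_2$ contains an induced subgraph isomorphic to $H_1$. A graph $G$ is $\mathcal H$-free if no $H\in\mathcal H$ satisfies $H\prec G$. For families $\mathcal H_1,\mathcal H_2$, write $\mathcal H_1\le\mathcal H_2$ if for every $H_2\in\mathcal H_2$ there is $H_1\in\mathcal H_1$ with $H_1\prec H_2$. For a vertex $v$ of $G$, the sharp degree is $\mathrm{sdeg}(v)=c(G-v)-c(G)+1$, where $c(\cdot)$ is the number of connected components. $K_{1,n}$ is the star with $n$ leaves, $nG$ the disjoint union of $n$ copies of $G$, and $G_n$ is the graph obtained from $K_n$ by attaching $n$ new pendant vertices to each vertex of $K_n$. *)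

theory Defs
  imports Main
begin

text \<open>Finite simple graphs on natural-number vertices: a vertex set and a set of
  2-element edges. Every finite graph is isomorphic to one of this form.\<close>

type_synonym graph = "nat set \<times> nat set set"

definition verts :: "graph \<Rightarrow> nat set" where "verts G = fst G"
definition edges :: "graph \<Rightarrow> nat set set" where "edges G = snd G"

definition wf_graph :: "graph \<Rightarrow> bool" where
  "wf_graph G \<longleftrightarrow> finite (verts G) \<and>
     (\<forall>e\<in>edges G. \<exists>u v. e = {u, v} \<and> u \<noteq> v \<and> u \<in> verts G \<and> v \<in> verts G)"

definition induced_sub :: "graph \<Rightarrow> graph \<Rightarrow> bool" (infix "\<prec>" 50) where
  "H1 \<prec> H2 \<longleftrightarrow> (\<exists>f. inj_on f (verts H1) \<and> f ` verts H1 \<subseteq> verts H2 \<and>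
     (\<forall>u\<in>verts H1. \<forall>v\<in>verts H1. {u, v} \<in> edges H1 \<longleftrightarrow> {f u, f v} \<in> edges H2))"

definition H_free :: "graph set \<Rightarrow> graph \<Rightarrow> bool" where
  "H_free \<H> G \<longleftrightarrow> \<not> (\<exists>H\<in>\<H>. H \<prec> G)"

definition fam_le :: "graph set \<Rightarrow> graph set \<Rightarrow> bool" where
  "fam_le \<H>1 \<H>2 \<longleftrightarrow> (\<forall>H2\<in>\<H>2. \<exists>H1\<in>\<H>1. H1 \<prec> H2)"

definition adj :: "graph \<Rightarrow> nat \<Rightarrow> nat \<Rightarrow> bool" where
  "adj G u v \<longleftrightarrow> u \<in> verts G \<and> v \<in> verts G \<and> {u, v} \<in> edges G"

definition conn_rel :: "graph \<Rightarrow> (nat \<times> nat) set" where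
  "conn_rel G = {(u, v). u \<in> verts G \<and> v \<in> verts G \<and> (adj G)\<^sup>*\<^sup>* u v}"

definition ncomp :: "graph \<Rightarrow> nat" where
  "ncomp G = card (verts G // conn_rel G)"

definition del_vertex :: "graph \<Rightarrow> nat \<Rightarrow> graph" where
  "del_vertex G v = (verts G - {v}, {e \<in> edges G. v \<notin> e})"

definition sdeg :: "graph \<Rightarrow> nat \<Rightarrow> int" where
  "sdeg G v = int (ncomp (del_vertex G v)) - int (ncomp G) + 1"

text \<open>n K_{1,n}: copy i has centre i*(n+1) and leaves i*(n+1)+j, 1 \<le> j \<le> n.\<close>
definition stars :: "nat \<Rightarrow> graph" where
  "stars n = ({0..<n * (n + 1)},
     {{i * (n + 1), i * (n + 1) + j} | i j. i < n \<and> 1 \<le> j \<and> j \<le> n})"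

text \<open>G_n: clique on 0..n-1; vertex i gets pendant vertices n + i*n + j, j < n.\<close>
definition Gn :: "nat \<Rightarrow> graph" where
  "Gn n = ({0..<n + n * n},
     {{i, k} | i k. i < n \<and> k < n \<and> i \<noteq> k} \<union>
     {{i, n + i * n + j} | i j. i < n \<and> j < n})"

end

(* A vertex v has sharp degree at least c iff it has c neighbours lying in pairwise distinct
   components of G - v.

   Suppose H \<le> {nK_{1,n}, G_n} and an H-free graph had R(n,n) vertices of sharp degree at
   least 2n. By Ramsey, n of them form a clique or an independent set. Each chosen vertex v
   keeps n such neighbours whose components in G - v contain none of the other n - 1 chosen
   vertices. These n^2 neighbours are pairwise distinct and non-adjacent, and each is adjacent
   to its own chosen vertex only, so they induce, together with the chosen vertices, G_n or
   nK_{1,n}, and hence a member of H.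

   Conversely, the n centres of nK_{1,n} and of G_n have n pendant neighbours each, hence
   sharp degree at least n; for n > max c1 c2 one of these graphs is H-free, a contradiction. *)
theory Submission
  imports Defs "HOL-Library.Ramsey"
begin

section \<open>Components and the sharp degree\<close>

abbreviation reachable :: "graph \<Rightarrow> nat \<Rightarrow> nat \<Rightarrow> bool" where
  "reachable G \<equiv> (adj G)\<^sup>*\<^sup>*"

lemma adj_sym: "adj G u v \<Longrightarrow> adj G v u"
  by (auto simp: adj_def insert_commute)

lemma adj_irrefl: "wf_graph G \<Longrightarrow> \<not> adj G v v"
  unfolding wf_graph_def adj_def by (metis doubleton_eq_iff insert_absorb2)

lemma edge_iff_adj: "u \<in> verts G \<Longrightarrow> v \<in> verts G \<Longrightarrow> {u, v} \<in> edges G \<longleftrightarrow> adj G u v"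
  by (simp add: adj_def)

lemma reachable_sym: "reachable G u v \<Longrightarrow> reachable G v u"
  by (induction rule: rtranclp.induct) (auto intro: converse_rtranclp_into_rtranclp adj_sym)

lemma reachable_in_verts: "reachable G u v \<Longrightarrow> u \<in> verts G \<Longrightarrow> v \<in> verts G"
  by (induction rule: rtranclp.induct) (auto simp: adj_def)

lemma equiv_conn_rel: "equiv (verts G) (conn_rel G)"
  unfolding equiv_def refl_on_def sym_def trans_def conn_rel_def
  by (auto intro: reachable_sym rtranclp_trans)

lemma conn_rel_Image: "x \<in> verts G \<Longrightarrow> conn_rel G `` {x} = {y. reachable G x y}"
  using reachable_in_verts[of G x] by (auto simp: conn_rel_def)

lemma conn_rel_class_eq_iff:
  "x \<in> verts G \<Longrightarrow> y \<in> verts G \<Longrightarrow> conn_rel G `` {x} = conn_rel G `` {y} \<longleftrightarrow> reachable G x y"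
  using eq_equiv_class_iff[OF equiv_conn_rel] by (simp add: conn_rel_def)

lemma finite_components: "wf_graph G \<Longrightarrow> finite (verts G // conn_rel G)"
  by (rule finite_quotient) (auto simp: wf_graph_def conn_rel_def)

lemma verts_del_vertex [simp]: "verts (del_vertex G v) = verts G - {v}"
  by (simp add: del_vertex_def verts_def)

lemma adj_del_vertex [simp]: "adj (del_vertex G v) x y \<longleftrightarrow> adj G x y \<and> x \<noteq> v \<and> y \<noteq> v"
  by (auto simp: adj_def del_vertex_def verts_def edges_def)

lemma wf_graph_del_vertex: "wf_graph G \<Longrightarrow> wf_graph (del_vertex G v)"
  by (fastforce simp: wf_graph_def del_vertex_def verts_def edges_def)

lemma reachable_del_vertex_avoids: "reachable (del_vertex G v) x y \<Longrightarrow> x \<noteq> v \<Longrightarrow> y \<noteq> v"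
  by (induction rule: rtranclp.induct) auto

lemma reachable_del_vertexD: "reachable (del_vertex G v) x y \<Longrightarrow> reachable G x y"
  by (induction rule: rtranclp.induct) (auto intro: rtranclp.rtrancl_into_rtrancl)

text \<open>A walk from x leaves the component of x in G - v only through a neighbour of v.\<close>
lemma reachable_del_vertex_iff:
  assumes "x \<noteq> v" and no_nbr: "\<And>z. reachable (del_vertex G v) x z \<Longrightarrow> \<not> adj G v z"
  shows "reachable (del_vertex G v) x y \<longleftrightarrow> reachable G x y"
proof
  assume "reachable G x y"
  then show "reachable (del_vertex G v) x y"
  proof (induction rule: rtranclp_induct)
    case (step y z)
    have "y \<noteq> v" using reachable_del_vertex_avoids[OF step.IH \<open>x \<noteq> v\<close>] .
    moreover have "z \<noteq> v" using no_nbr step.IH step.hyps(2) adj_sym by blast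
    ultimately show ?case using step by (auto intro: rtranclp.rtrancl_into_rtrancl)
  qed simp
qed (rule reachable_del_vertexD)

lemma component_del_vertex_has_nbr_iff:
  assumes "x \<in> verts G - {v}"
  shows "(\<exists>z. reachable (del_vertex G v) x z \<and> adj G v z) \<longleftrightarrow> reachable G x v"
proof
  assume "\<exists>z. reachable (del_vertex G v) x z \<and> adj G v z"
  then show "reachable G x v"
    by (meson adj_sym reachable_del_vertexD rtranclp.rtrancl_into_rtrancl)
next
  assume "reachable G x v"
  then show "\<exists>z. reachable (del_vertex G v) x z \<and> adj G v z"
    using reachable_del_vertex_iff[of x v G v] reachable_del_vertex_avoids[of G v x v] assms by blast
qed

lemma components_del_vertex_without_nbr:
  assumes "v \<in> verts G"
  shows "{C \<in> (verts G - {v}) // conn_rel (del_vertex G v). \<not> (\<exists>x\<in>C. adj G v x)}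
       = verts G // conn_rel G - {conn_rel G `` {v}}" (is "?L = ?R")
proof -
  have same: "conn_rel (del_vertex G v) `` {x} = conn_rel G `` {x}"
    if "x \<in> verts G - {v}" "\<not> reachable G x v" for x
  proof -
    have no_nbr: "\<And>z. reachable (del_vertex G v) x z \<Longrightarrow> \<not> adj G v z"
      using component_del_vertex_has_nbr_iff that by blast
    have "conn_rel (del_vertex G v) `` {x} = {y. reachable (del_vertex G v) x y}"
      using conn_rel_Image[of x "del_vertex G v"] that(1) by simp
    also have "\<dots> = {y. reachable G x y}"
      using reachable_del_vertex_iff[OF _ no_nbr] that(1) by blast
    also have "\<dots> = conn_rel G `` {x}"
      using conn_rel_Image[of x G] that(1) by simp
    finally show ?thesis .
  qed
  have nbr_iff: "(\<exists>y\<in>conn_rel (del_vertex G v) `` {x}. adj G v y) \<longleftrightarrow> reachable G x v"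
    if "x \<in> verts G - {v}" for x
    using component_del_vertex_has_nbr_iff[OF that] conn_rel_Image[of x "del_vertex G v"] that
    by simp
  note class_v = conn_rel_class_eq_iff[OF _ assms]
  show ?thesis
  proof (intro equalityI subsetI)
    fix C assume "C \<in> ?L"
    then obtain x where x: "x \<in> verts G - {v}" "C = conn_rel (del_vertex G v) `` {x}"
      and no_nbr: "\<not> (\<exists>y\<in>C. adj G v y)"
      by (auto elim: quotientE)
    have "\<not> reachable G x v" using nbr_iff[OF x(1)] x(2) no_nbr by blast
    then show "C \<in> ?R"
      using x same class_v by (auto intro: quotientI)
  next
    fix C assume C: "C \<in> ?R"
    then obtain x where x: "x \<in> verts G" "C = conn_rel G `` {x}"
      by (auto elim: quotientE)
    then have "\<not> reachable G x v" using C class_v by blast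
    moreover from this have x': "x \<in> verts G - {v}" using x(1) by auto
    ultimately have "C = conn_rel (del_vertex G v) `` {x}" using x same by simp
    then show "C \<in> ?L"
      using x' quotientI[OF x', of "conn_rel (del_vertex G v)"] nbr_iff \<open>\<not> reachable G x v\<close>
      by auto
  qed
qed

lemma sdeg_eq_card_components_with_nbr:
  assumes "wf_graph G" "v \<in> verts G"
  shows "sdeg G v = int (card {C \<in> (verts G - {v}) // conn_rel (del_vertex G v). \<exists>x\<in>C. adj G v x})"
proof -
  let ?Q' = "(verts G - {v}) // conn_rel (del_vertex G v)"
  let ?N = "{C \<in> ?Q'. \<exists>x\<in>C. adj G v x}" and ?M = "{C \<in> ?Q'. \<not> (\<exists>x\<in>C. adj G v x)}"
  have fin: "finite ?Q'" "finite (verts G // conn_rel G)"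
    using finite_components[of "del_vertex G v"] finite_components[of G] assms
    by (simp_all add: wf_graph_del_vertex)
  have "?Q' = ?N \<union> ?M"
    by blast
  then have "ncomp (del_vertex G v) = card (?N \<union> ?M)"
    by (simp only: ncomp_def verts_del_vertex)
  also have "\<dots> = card ?N + card ?M"
    using fin by (intro card_Un_disjoint) auto
  finally have "ncomp (del_vertex G v) = card ?N + card ?M" .
  moreover have "card ?M = ncomp G - 1"
    using components_del_vertex_without_nbr[OF assms(2)] fin assms(2)
    by (simp add: ncomp_def quotientI)
  moreover have "ncomp G > 0"
    using fin(2) quotientI[OF assms(2)] by (auto simp: ncomp_def card_gt_0_iff)
  ultimately show ?thesis
    by (simp add: sdeg_def)
qed

definition separated_nbrs :: "graph \<Rightarrow> nat \<Rightarrow> nat set \<Rightarrow> bool" where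
  "separated_nbrs G v L \<longleftrightarrow>
     (\<forall>x\<in>L. adj G v x) \<and> (\<forall>x\<in>L. \<forall>y\<in>L. reachable (del_vertex G v) x y \<longrightarrow> x = y)"

lemma separated_nbrs_subset: "separated_nbrs G v L \<Longrightarrow> L' \<subseteq> L \<Longrightarrow> separated_nbrs G v L'"
  by (auto simp: separated_nbrs_def)

lemma card_le_image_iff_inj_subset:
  assumes "finite A"
  shows "c \<le> card (f ` A) \<longleftrightarrow> (\<exists>L \<subseteq> A. card L = c \<and> inj_on f L)"
proof
  assume "c \<le> card (f ` A)"
  then obtain S where S: "S \<subseteq> f ` A" "card S = c"
    by (rule obtain_subset_with_card_n)
  let ?L = "inv_into A f ` S"
  have "?L \<subseteq> A" using S(1) by (auto intro: inv_into_into)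
  moreover have "card ?L = c"
    using S inj_on_inv_into[OF S(1)] by (simp add: card_image)
  moreover have "inj_on f ?L"
  proof (rule inj_onI)
    fix a b assume "a \<in> ?L" "b \<in> ?L" "f a = f b"
    then obtain s t where st: "s \<in> S" "t \<in> S" "a = inv_into A f s" "b = inv_into A f t"
      by blast
    then have "f a = s" "f b = t" using S(1) by (auto intro: f_inv_into_f)
    then show "a = b" using st \<open>f a = f b\<close> by simp
  qed
  ultimately show "\<exists>L \<subseteq> A. card L = c \<and> inj_on f L" by blast
next
  assume "\<exists>L \<subseteq> A. card L = c \<and> inj_on f L"
  then obtain L where L: "L \<subseteq> A" "card L = c" "inj_on f L" by blast
  then have "c = card (f ` L)" by (simp add: card_image)
  also have "\<dots> \<le> card (f ` A)" using L(1) assms by (intro card_mono) auto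
  finally show "c \<le> card (f ` A)" .
qed

lemma components_with_nbr_eq_image:
  assumes "wf_graph G"
  shows "{C \<in> (verts G - {v}) // conn_rel (del_vertex G v). \<exists>x\<in>C. adj G v x}
       = (\<lambda>x. conn_rel (del_vertex G v) `` {x}) ` {x. adj G v x}"
proof -
  let ?R = "conn_rel (del_vertex G v)"
  have nbr_in: "x \<in> verts G - {v}" if "adj G v x" for x
    using that adj_irrefl[OF assms] by (auto simp: adj_def)
  show ?thesis
  proof (intro equalityI subsetI)
    fix C assume C: "C \<in> {C \<in> (verts G - {v}) // ?R. \<exists>x\<in>C. adj G v x}"
    then obtain x where x: "x \<in> C" "adj G v x" by blast
    from C obtain y where C: "C = ?R `` {y}" "y \<in> verts G - {v}"
      by (blast elim: quotientE)
    then have "C = ?R `` {x}"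
      using x conn_rel_Image[of y "del_vertex G v"] conn_rel_class_eq_iff[of y "del_vertex G v" x] nbr_in
      by simp
    then show "C \<in> (\<lambda>x. ?R `` {x}) ` {x. adj G v x}"
      using x(2) by blast
  next
    fix C assume "C \<in> (\<lambda>x. ?R `` {x}) ` {x. adj G v x}"
    then obtain x where C: "C = ?R `` {x}" and x: "adj G v x" by blast
    have "x \<in> C" using C nbr_in[OF x] conn_rel_Image[of x "del_vertex G v"] by simp
    then show "C \<in> {C \<in> (verts G - {v}) // ?R. \<exists>x\<in>C. adj G v x}"
      using C x quotientI[OF nbr_in[OF x], of ?R] by blast
  qed
qed

lemma sdeg_ge_iff_separated_nbrs:
  assumes "wf_graph G" "v \<in> verts G"
  shows "int c \<le> sdeg G v \<longleftrightarrow> (\<exists>L. finite L \<and> card L = c \<and> separated_nbrs G v L)"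
proof -
  let ?cls = "\<lambda>x. conn_rel (del_vertex G v) `` {x}" and ?nbrs = "{x. adj G v x}"
  have nbrs: "?nbrs \<subseteq> verts G - {v}" using adj_irrefl[OF assms(1)] by (auto simp: adj_def)
  have fin: "finite ?nbrs" using finite_subset[OF nbrs] assms(1) by (simp add: wf_graph_def)
  have sdeg: "sdeg G v = int (card (?cls ` ?nbrs))"
    using sdeg_eq_card_components_with_nbr[OF assms] components_with_nbr_eq_image[OF assms(1)]
    by simp
  have "inj_on ?cls L \<longleftrightarrow> (\<forall>x\<in>L. \<forall>y\<in>L. reachable (del_vertex G v) x y \<longrightarrow> x = y)"
    if "L \<subseteq> ?nbrs" for L
    using that nbrs conn_rel_class_eq_iff[of _ "del_vertex G v"] unfolding inj_on_def
    by (metis verts_del_vertex subsetD)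
  then have sep: "separated_nbrs G v L \<longleftrightarrow> L \<subseteq> ?nbrs \<and> inj_on ?cls L" for L
    unfolding separated_nbrs_def by blast
  show ?thesis
    unfolding sdeg sep of_nat_le_iff card_le_image_iff_inj_subset[OF fin]
    using finite_subset[OF _ fin] by blast
qed

lemma separated_nbrs_if_pendant:
  assumes "\<forall>x\<in>L. adj G v x" and pendant: "\<And>x z. x \<in> L \<Longrightarrow> adj G x z \<Longrightarrow> z = v"
  shows "separated_nbrs G v L"
  unfolding separated_nbrs_def
proof (intro conjI assms ballI impI)
  fix x y assume "x \<in> L" "reachable (del_vertex G v) x y"
  from this(2) show "x = y"
    by (rule converse_rtranclpE) (auto dest: pendant[OF \<open>x \<in> L\<close>])
qed

lemma card_separated_nbrs_avoiding:
  assumes sep: "separated_nbrs G v L" and "finite L" "finite W"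
  shows "card L - card W \<le> card {x \<in> L. \<forall>w\<in>W. \<not> reachable (del_vertex G v) x w}"
    (is "_ \<le> card ?L'")
proof -
  define f where "f x = (SOME w. w \<in> W \<and> reachable (del_vertex G v) x w)" for x
  have f: "f x \<in> W \<and> reachable (del_vertex G v) x (f x)" if "x \<in> L - ?L'" for x
  proof -
    have "\<exists>w. w \<in> W \<and> reachable (del_vertex G v) x w" using that by blast
    then show ?thesis
      unfolding f_def by (rule someI_ex[of "\<lambda>w. w \<in> W \<and> reachable (del_vertex G v) x w"])
  qed
  txt \<open>Two members of L reaching the same vertex of W would lie in one component of G - v.\<close>
  have "inj_on f (L - ?L')"
  proof (rule inj_onI)
    fix x y assume xy: "x \<in> L - ?L'" "y \<in> L - ?L'" "f x = f y"
    have "reachable (del_vertex G v) x (f x)" "reachable (del_vertex G v) (f x) y"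
      using f[OF xy(1)] f[OF xy(2)] xy(3) reachable_sym by auto
    then have "reachable (del_vertex G v) x y" by (rule rtranclp_trans)
    moreover have "x \<in> L" "y \<in> L" using xy(1,2) by auto
    ultimately show "x = y" using sep unfolding separated_nbrs_def by blast
  qed
  then have "card (L - ?L') \<le> card W"
    using f \<open>finite W\<close> by (intro card_inj_on_le) auto
  moreover have sub: "?L' \<subseteq> L" by blast
  then have "card (L - ?L') = card L - card ?L'"
    using finite_subset[OF sub \<open>finite L\<close>] by (intro card_Diff_subset)
  moreover have "card ?L' \<le> card L" using card_mono[OF \<open>finite L\<close> sub] .
  ultimately show ?thesis by linarith
qed

lemma obtain_separated_nbrs_avoiding:
  assumes "wf_graph G" "v \<in> verts G" "finite W" "int (n + card W) \<le> sdeg G v"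
  obtains L where "finite L" "card L = n" "separated_nbrs G v L"
    "\<And>x w. x \<in> L \<Longrightarrow> w \<in> W \<Longrightarrow> \<not> reachable (del_vertex G v) x w"
proof -
  have "\<exists>L0. finite L0 \<and> card L0 = n + card W \<and> separated_nbrs G v L0"
    using iffD1[OF sdeg_ge_iff_separated_nbrs[OF assms(1,2)] assms(4)] .
  then obtain L0 where L0: "finite L0" "card L0 = n + card W" "separated_nbrs G v L0"
    by blast
  let ?L' = "{x \<in> L0. \<forall>w\<in>W. \<not> reachable (del_vertex G v) x w}"
  have "n \<le> card ?L'"
    using card_separated_nbrs_avoiding[OF L0(3,1) \<open>finite W\<close>] L0(2) by simp
  then obtain L where L: "L \<subseteq> ?L'" "card L = n" "finite L"
    by (rule obtain_subset_with_card_n)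
  show thesis
  proof (rule that[OF L(3,2)])
    show "separated_nbrs G v L" using separated_nbrs_subset[OF L0(3)] L(1) by blast
    show "\<not> reachable (del_vertex G v) x w" if "x \<in> L" "w \<in> W" for x w
      using L(1) that by blast
  qed
qed

section \<open>Coordinates on nK_{1,n} and G_n\<close>

lemma mult_add_less_mult: "i < n \<Longrightarrow> a < m \<Longrightarrow> i * m + a < n * (m::nat)"
proof -
  assume "i < n" "a < m"
  then have "(i + 1) * m \<le> n * m" by (intro mult_le_mono1) simp
  then show ?thesis using \<open>a < m\<close> by simp
qed

lemma doubleton_mem_encoded_iff:
  assumes enc_dec: "\<And>p. p \<in> V \<Longrightarrow> enc (dec p) = p" and dec_enc: "\<And>x. x \<in> A \<Longrightarrow> dec (enc x) = x"
    and "dec ` V \<subseteq> A" and "p \<in> V" "q \<in> V"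
  shows "{p, q} \<in> {{enc x, enc y} | x y. x \<in> A \<and> y \<in> A \<and> R x y} \<longleftrightarrow>
    R (dec p) (dec q) \<or> R (dec q) (dec p)"
proof
  assume "{p, q} \<in> {{enc x, enc y} | x y. x \<in> A \<and> y \<in> A \<and> R x y}"
  then obtain x y where xy: "{p, q} = {enc x, enc y}" "x \<in> A" "y \<in> A" "R x y" by blast
  then have "(dec p = x \<and> dec q = y) \<or> (dec q = x \<and> dec p = y)"
    using dec_enc by (auto simp: doubleton_eq_iff)
  then show "R (dec p) (dec q) \<or> R (dec q) (dec p)" using xy(4) by blast
next
  have in_A: "dec p \<in> A" "dec q \<in> A" using assms(3-5) by blast+
  assume "R (dec p) (dec q) \<or> R (dec q) (dec p)"
  then show "{p, q} \<in> {{enc x, enc y} | x y. x \<in> A \<and> y \<in> A \<and> R x y}"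
  proof
    assume "R (dec p) (dec q)"
    then show ?thesis
      using in_A enc_dec assms(4,5) by (intro CollectI exI[of _ "dec p"] exI[of _ "dec q"]) simp
  next
    assume "R (dec q) (dec p)"
    then show ?thesis using in_A enc_dec assms(4,5) insert_commute
      by (intro CollectI exI[of _ "dec q"] exI[of _ "dec p"]) simp
  qed
qed

text \<open>Both nK_{1,n} and G_n are coded by the grid: (i, 0) is the centre of the i-th star and
  (i, a) with a > 0 its leaves.\<close>
abbreviation grid :: "nat \<Rightarrow> (nat \<times> nat) set" where
  "grid n \<equiv> {..<n} \<times> {..n}"

lemma wf_graph_if_encoded:
  assumes "finite (verts G)" "enc ` A \<subseteq> verts G" "inj_on enc A"
    and "edges G = {{enc x, enc y} | x y. x \<in> A \<and> y \<in> A \<and> R x y}"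
    and "\<And>x y. R x y \<Longrightarrow> x \<noteq> y"
  shows "wf_graph G"
  unfolding wf_graph_def
proof (intro conjI ballI)
  fix e assume "e \<in> edges G"
  then obtain x y where "e = {enc x, enc y}" "x \<in> A" "y \<in> A" "R x y"
    using assms(4) by blast
  then show "\<exists>u v. e = {u, v} \<and> u \<noteq> v \<and> u \<in> verts G \<and> v \<in> verts G"
    using assms(2,3,5) inj_onD[OF assms(3)] by blast
qed (rule assms(1))

definition stars_encode :: "nat \<Rightarrow> nat \<times> nat \<Rightarrow> nat" where
  "stars_encode n = (\<lambda>(i, a). i * (n + 1) + a)"

definition stars_decode :: "nat \<Rightarrow> nat \<Rightarrow> nat \<times> nat" where
  "stars_decode n p = (p div (n + 1), p mod (n + 1))"

lemma verts_stars: "verts (stars n) = {0..<n * (n + 1)}"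
  by (simp add: stars_def verts_def)

lemma stars_encode_decode: "stars_encode n (stars_decode n p) = p"
  by (simp only: stars_encode_def stars_decode_def prod.case div_mult_mod_eq)

lemma stars_decode_encode: "x \<in> grid n \<Longrightarrow> stars_decode n (stars_encode n x) = x"
proof -
  assume "x \<in> grid n"
  then have "snd x < n + 1" by auto
  then have "(fst x * (n + 1) + snd x) div (n + 1) = fst x \<and> (fst x * (n + 1) + snd x) mod (n + 1) = snd x"
    by (simp del: add_Suc_right mult_Suc_right)
  then show ?thesis
    by (simp only: stars_encode_def stars_decode_def case_prod_beta prod.collapse)
qed

lemma stars_decode_in_grid: "stars_decode n ` verts (stars n) \<subseteq> grid n"
  by (auto simp: stars_decode_def verts_stars less_mult_imp_div_less less_Suc_eq_le)

lemma stars_encode_in_verts: "stars_encode n ` grid n \<subseteq> verts (stars n)"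
proof (rule image_subsetI)
  fix x assume "x \<in> grid n"
  then have "fst x * (n + 1) + snd x < n * (n + 1)"
    by (intro mult_add_less_mult) auto
  then show "stars_encode n x \<in> verts (stars n)"
    by (simp only: stars_encode_def verts_stars case_prod_beta atLeastLessThan_iff) simp
qed

lemma edges_stars_encoded:
  "edges (stars n) = {{stars_encode n x, stars_encode n y} | x y.
     x \<in> grid n \<and> y \<in> grid n \<and> fst x = fst y \<and> snd x = 0 \<and> snd y \<noteq> 0}"
proof (intro equalityI subsetI)
  fix e assume "e \<in> edges (stars n)"
  then obtain i j where "e = {i * (n + 1), i * (n + 1) + j}" "i < n" "1 \<le> j" "j \<le> n"
    by (auto simp: stars_def edges_def)
  then show "e \<in> {{stars_encode n x, stars_encode n y} | x y.
     x \<in> grid n \<and> y \<in> grid n \<and> fst x = fst y \<and> snd x = 0 \<and> snd y \<noteq> 0}"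
    by (intro CollectI exI[of _ "(i, 0)"] exI[of _ "(i, j)"]) (simp add: stars_encode_def)
next
  fix e assume "e \<in> {{stars_encode n x, stars_encode n y} | x y.
     x \<in> grid n \<and> y \<in> grid n \<and> fst x = fst y \<and> snd x = 0 \<and> snd y \<noteq> 0}"
  then obtain i j where "e = {i * (n + 1), i * (n + 1) + j}" "i < n" "1 \<le> j" "j \<le> n"
    by (auto simp: stars_encode_def)
  then show "e \<in> edges (stars n)"
    unfolding stars_def edges_def snd_conv by blast
qed

lemma wf_stars: "wf_graph (stars n)"
  by (rule wf_graph_if_encoded[OF _ stars_encode_in_verts _ edges_stars_encoded])
    (auto simp: verts_stars intro!: inj_on_inverseI[of _ "stars_decode n"] stars_decode_encode)

lemma stars_edge_iff:
  assumes "p \<in> verts (stars n)" "q \<in> verts (stars n)"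
  shows "{p, q} \<in> edges (stars n) \<longleftrightarrow>
    fst (stars_decode n p) = fst (stars_decode n q) \<and>
    (snd (stars_decode n p) = 0) \<noteq> (snd (stars_decode n q) = 0)"
proof -
  have "{p, q} \<in> edges (stars n) \<longleftrightarrow>
    (fst (stars_decode n p) = fst (stars_decode n q) \<and> snd (stars_decode n p) = 0 \<and> snd (stars_decode n q) \<noteq> 0) \<or>
    (fst (stars_decode n q) = fst (stars_decode n p) \<and> snd (stars_decode n q) = 0 \<and> snd (stars_decode n p) \<noteq> 0)"
    unfolding edges_stars_encoded
    by (rule doubleton_mem_encoded_iff[OF stars_encode_decode stars_decode_encode stars_decode_in_grid assms,
          where R = "\<lambda>x y. fst x = fst y \<and> snd x = 0 \<and> snd y \<noteq> 0"])
  then show ?thesis by auto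
qed

definition Gn_encode :: "nat \<Rightarrow> nat \<times> nat \<Rightarrow> nat" where
  "Gn_encode n = (\<lambda>(i, a). case a of 0 \<Rightarrow> i | Suc j \<Rightarrow> n + i * n + j)"

definition Gn_decode :: "nat \<Rightarrow> nat \<Rightarrow> nat \<times> nat" where
  "Gn_decode n p = (if p < n then (p, 0) else ((p - n) div n, Suc ((p - n) mod n)))"

lemma verts_Gn: "verts (Gn n) = {0..<n + n * n}"
  by (simp add: Gn_def verts_def)

lemma Gn_encode_decode: "Gn_encode n (Gn_decode n p) = p"
  by (simp add: Gn_encode_def Gn_decode_def)

lemma Gn_decode_encode: "x \<in> grid n \<Longrightarrow> Gn_decode n (Gn_encode n x) = x"
  by (auto simp: Gn_encode_def Gn_decode_def split: nat.splits)

lemma Gn_decode_in_grid: "Gn_decode n ` verts (Gn n) \<subseteq> grid n"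
proof (rule image_subsetI)
  fix p assume p: "p \<in> verts (Gn n)"
  show "Gn_decode n p \<in> grid n"
  proof (cases "p < n")
    case False
    with p have "p - n < n * n" by (simp add: verts_Gn)
    moreover from this have "0 < n" by (cases n) auto
    ultimately show ?thesis using False by (simp add: Gn_decode_def less_mult_imp_div_less Suc_le_eq)
  qed (simp add: Gn_decode_def)
qed

lemma Gn_encode_in_verts: "Gn_encode n ` grid n \<subseteq> verts (Gn n)"
proof (rule image_subsetI)
  fix x assume "x \<in> grid n"
  moreover obtain i a where x: "x = (i, a)" by (cases x)
  ultimately have "i < n" "a \<le> n" by auto
  show "Gn_encode n x \<in> verts (Gn n)"
  proof (cases a)
    case (Suc j)
    then have "i * n + j < n * n" using \<open>i < n\<close> \<open>a \<le> n\<close> by (intro mult_add_less_mult) auto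
    then show ?thesis using Suc x by (simp add: Gn_encode_def verts_Gn)
  qed (use x \<open>i < n\<close> in \<open>simp add: Gn_encode_def verts_Gn\<close>)
qed

lemma edges_Gn_encoded:
  "edges (Gn n) = {{Gn_encode n x, Gn_encode n y} | x y. x \<in> grid n \<and> y \<in> grid n \<and>
     snd x = 0 \<and> (fst x \<noteq> fst y \<and> snd y = 0 \<or> fst x = fst y \<and> snd y \<noteq> 0)}"
    (is "_ = ?E")
proof (intro equalityI subsetI)
  fix e assume "e \<in> edges (Gn n)"
  then consider (clique) i k where "e = {i, k}" "i < n" "k < n" "i \<noteq> k"
    | (pendant) i j where "e = {i, n + i * n + j}" "i < n" "j < n"
    by (auto simp: Gn_def edges_def)
  then show "e \<in> ?E"
  proof cases
    case clique
    then show ?thesis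
      by (intro CollectI exI[of _ "(i, 0)"] exI[of _ "(k, 0)"]) (simp add: Gn_encode_def)
  next
    case pendant
    then show ?thesis
      by (intro CollectI exI[of _ "(i, 0)"] exI[of _ "(i, Suc j)"]) (simp add: Gn_encode_def)
  qed
next
  fix e assume "e \<in> ?E"
  then obtain i k b where e: "e = {Gn_encode n (i, 0), Gn_encode n (k, b)}" "i < n" "k < n" "b \<le> n"
    and "i \<noteq> k \<and> b = 0 \<or> i = k \<and> b \<noteq> 0"
    by auto
  then consider "e = {i, k}" "i \<noteq> k" | j where "e = {i, n + i * n + j}" "j < n"
    by (cases b) (auto simp: Gn_encode_def)
  then show "e \<in> edges (Gn n)"
    using e(2,3) unfolding Gn_def edges_def snd_conv by cases blast+
qed

lemma wf_Gn: "wf_graph (Gn n)"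
  by (rule wf_graph_if_encoded[OF _ Gn_encode_in_verts _ edges_Gn_encoded])
    (auto simp: verts_Gn intro!: inj_on_inverseI[of _ "Gn_decode n"] Gn_decode_encode)

lemma Gn_edge_iff:
  assumes "p \<in> verts (Gn n)" "q \<in> verts (Gn n)"
  shows "{p, q} \<in> edges (Gn n) \<longleftrightarrow>
    (fst (Gn_decode n p) = fst (Gn_decode n q) \<and> (snd (Gn_decode n p) = 0) \<noteq> (snd (Gn_decode n q) = 0)) \<or>
    (snd (Gn_decode n p) = 0 \<and> snd (Gn_decode n q) = 0 \<and> fst (Gn_decode n p) \<noteq> fst (Gn_decode n q))"
proof -
  let ?R = "\<lambda>x y. snd x = 0 \<and> (fst x \<noteq> fst y \<and> snd y = 0 \<or> fst x = fst y \<and> snd y \<noteq> 0)"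
  have "{p, q} \<in> edges (Gn n) \<longleftrightarrow> ?R (Gn_decode n p) (Gn_decode n q) \<or> ?R (Gn_decode n q) (Gn_decode n p)"
    unfolding edges_Gn_encoded
    by (rule doubleton_mem_encoded_iff[OF Gn_encode_decode Gn_decode_encode Gn_decode_in_grid assms,
          where R = ?R])
  then show ?thesis by argo
qed

lemma bij_betw_stars_decode: "bij_betw (stars_decode n) (verts (stars n)) (grid n)"
  by (rule bij_betw_byWitness[where f' = "stars_encode n"])
    (use stars_encode_decode stars_decode_encode stars_decode_in_grid stars_encode_in_verts in auto)

lemma bij_betw_Gn_decode: "bij_betw (Gn_decode n) (verts (Gn n)) (grid n)"
  by (rule bij_betw_byWitness[where f' = "Gn_encode n"])
    (use Gn_encode_decode Gn_decode_encode Gn_decode_in_grid Gn_encode_in_verts in auto)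

lemma many_high_sdeg_if_decodes:
  assumes wf: "wf_graph H" and bij: "bij_betw d (verts H) (grid m)"
    and leaf_edges: "\<And>p q. p \<in> verts H \<Longrightarrow> q \<in> verts H \<Longrightarrow> snd (d p) \<noteq> 0 \<Longrightarrow>
      {p, q} \<in> edges H \<longleftrightarrow> fst (d p) = fst (d q) \<and> snd (d q) = 0"
    and "c \<le> m"
  shows "m \<le> card {v \<in> verts H. int c \<le> sdeg H v}"
proof -
  let ?e = "inv_into (verts H) d"
  have e: "bij_betw ?e (grid m) (verts H)" using bij by (rule bij_betw_inv_into)
  have d_e: "d (?e x) = x" if "x \<in> grid m" for x
    using bij that by (rule bij_betw_inv_into_right)
  have e_d: "?e (d p) = p" if "p \<in> verts H" for p
    using bij that by (rule bij_betw_inv_into_left)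
  have e_in: "?e x \<in> verts H" if "x \<in> grid m" for x
    using bij_betwE[OF e] that by blast
  have inj_e: "inj_on ?e (grid m)" using e by (rule bij_betw_imp_inj_on)
  have high: "int c \<le> sdeg H (?e (i, 0))" if "i < m" for i
  proof -
    let ?c = "?e (i, 0)" and ?L = "?e ` ({i} \<times> {1..m})"
    have c: "?c \<in> verts H" "d ?c = (i, 0)" using that e_in d_e by auto
    have L: "x \<in> verts H \<and> fst (d x) = i \<and> snd (d x) \<noteq> 0" if "x \<in> ?L" for x
      using that \<open>i < m\<close> e_in d_e by auto
    have "separated_nbrs H ?c ?L"
    proof (rule separated_nbrs_if_pendant)
      show "\<forall>x\<in>?L. adj H ?c x"
      proof
        fix x assume "x \<in> ?L"
        then have x: "x \<in> verts H" "fst (d x) = i" "snd (d x) \<noteq> 0" using L by blast+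
        then have "{x, ?c} \<in> edges H" using leaf_edges[OF x(1) c(1) x(3)] c(2) by simp
        then show "adj H ?c x" using edge_iff_adj[OF x(1) c(1)] adj_sym by blast
      qed
      fix x z assume "x \<in> ?L" "adj H x z"
      then have x: "x \<in> verts H" "fst (d x) = i" "snd (d x) \<noteq> 0" and z: "z \<in> verts H" "{x, z} \<in> edges H"
        using L by (auto simp: adj_def)
      then have "d z = (i, 0)" using leaf_edges[OF x(1) z(1) x(3)] by (simp add: prod_eq_iff)
      then show "z = ?c" using e_d[OF z(1)] by simp
    qed
    moreover have "{i} \<times> {1..m} \<subseteq> grid m" using \<open>i < m\<close> by auto
    then have "card ?L = m"
      using card_image[OF inj_on_subset[OF inj_e]] by (simp add: card_cartesian_product)
    moreover have "finite ?L" by simp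
    ultimately have "int m \<le> sdeg H ?c"
      using sdeg_ge_iff_separated_nbrs[OF wf c(1)] by blast
    then show ?thesis using \<open>c \<le> m\<close> by linarith
  qed
  have centres: "?e ` ({..<m} \<times> {0}) \<subseteq> {v \<in> verts H. int c \<le> sdeg H v}"
  proof (rule image_subsetI)
    fix x assume "x \<in> {..<m} \<times> {0::nat}"
    then obtain i where "x = (i, 0)" "i < m" by blast
    then show "?e x \<in> {v \<in> verts H. int c \<le> sdeg H v}" using high e_in by simp
  qed
  have "{..<m} \<times> {0} \<subseteq> grid m" by auto
  then have "m = card (?e ` ({..<m} \<times> {0}))"
    using card_image[OF inj_on_subset[OF inj_e]] by (simp add: card_cartesian_product)
  also have "\<dots> \<le> card {v \<in> verts H. int c \<le> sdeg H v}"
    using wf centres by (intro card_mono) (simp_all add: wf_graph_def)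
  finally show ?thesis .
qed

lemma many_high_sdeg_stars: "c \<le> m \<Longrightarrow> m \<le> card {v \<in> verts (stars m). int c \<le> sdeg (stars m) v}"
  by (rule many_high_sdeg_if_decodes[OF wf_stars bij_betw_stars_decode]) (simp_all add: stars_edge_iff)

lemma many_high_sdeg_Gn: "c \<le> m \<Longrightarrow> m \<le> card {v \<in> verts (Gn m). int c \<le> sdeg (Gn m) v}"
  by (rule many_high_sdeg_if_decodes[OF wf_Gn bij_betw_Gn_decode]) (simp_all add: Gn_edge_iff)

section \<open>Stars with separated leaves\<close>

locale separated_stars =
  fixes G :: graph and n :: nat and centre :: "nat \<Rightarrow> nat" and leaf :: "nat \<Rightarrow> nat \<Rightarrow> nat"
  assumes wf: "wf_graph G"
    and centre_in_verts: "i < n \<Longrightarrow> centre i \<in> verts G"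
    and inj_centre: "inj_on centre {..<n}"
    and inj_leaf: "i < n \<Longrightarrow> inj_on (leaf i) {..<n}"
    and separated_leaves: "i < n \<Longrightarrow> separated_nbrs G (centre i) (leaf i ` {..<n})"
    and leaf_avoids_centres: "\<lbrakk>i < n; k < n; j < n; i \<noteq> k\<rbrakk> \<Longrightarrow>
       \<not> reachable (del_vertex G (centre i)) (leaf i j) (centre k)"
begin

lemma adj_centre_leaf: "i < n \<Longrightarrow> j < n \<Longrightarrow> adj G (centre i) (leaf i j)"
  using separated_leaves by (auto simp: separated_nbrs_def)

lemma leaf_ne_centre:
  assumes "i < n" "k < n" "j < n"
  shows "leaf i j \<noteq> centre k"
proof (cases "i = k")
  case True
  then show ?thesis using adj_centre_leaf[OF assms(1,3)] adj_irrefl[OF wf] by metis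
next
  case False
  then show ?thesis using leaf_avoids_centres[OF assms False] by auto
qed

lemma centre_eq_iff: "i < n \<Longrightarrow> k < n \<Longrightarrow> centre i = centre k \<longleftrightarrow> i = k"
  using inj_centre by (auto dest: inj_onD)

lemma leaf_reaches_own_centre:
  assumes "i < n" "k < n" "j < n"
  shows "reachable (del_vertex G (centre i)) (leaf k j) (centre k) \<longleftrightarrow> i \<noteq> k"
proof
  assume "i \<noteq> k"
  then have "adj (del_vertex G (centre i)) (leaf k j) (centre k)"
    using adj_sym[OF adj_centre_leaf] leaf_ne_centre centre_eq_iff assms by auto
  then show "reachable (del_vertex G (centre i)) (leaf k j) (centre k)" by blast
qed (use reachable_del_vertex_avoids leaf_ne_centre assms in blast)

lemma adj_centre_leaf_iff:
  assumes "i < n" "k < n" "j < n"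
  shows "adj G (centre i) (leaf k j) \<longleftrightarrow> i = k"
proof
  assume adj: "adj G (centre i) (leaf k j)"
  show "i = k"
  proof (rule ccontr)
    assume "i \<noteq> k"
    then have "adj (del_vertex G (centre k)) (leaf k j) (centre i)"
      using adj_sym[OF adj] leaf_ne_centre centre_eq_iff assms by auto
    then show False using leaf_avoids_centres[OF assms(2,1,3)] \<open>i \<noteq> k\<close> by blast
  qed
qed (use adj_centre_leaf assms in blast)

text \<open>Two distinct leaves that were equal or adjacent would be joined in G minus the
  centre of the first one, either to each other or to the centre of the second.\<close>
lemma leaves_apart:
  assumes "i < n" "k < n" "j < n" "j' < n" "(i, j) \<noteq> (k, j')"
  shows "leaf i j \<noteq> leaf k j' \<and> \<not> adj G (leaf i j) (leaf k j')"
proof (rule ccontr)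
  assume "\<not> ?thesis"
  then have "adj (del_vertex G (centre i)) (leaf i j) (leaf k j') \<or> leaf i j = leaf k j'"
    using leaf_ne_centre assms by auto
  then have joined: "reachable (del_vertex G (centre i)) (leaf i j) (leaf k j')"
    by (auto intro: r_into_rtranclp)
  show False
  proof (cases "i = k")
    case True
    then have "leaf i j \<noteq> leaf k j'" using inj_leaf assms by (auto dest: inj_onD)
    then show False
      using joined separated_leaves[OF assms(1)] True assms by (auto simp: separated_nbrs_def)
  next
    case False
    then show False
      using joined leaf_reaches_own_centre[OF assms(1,2,4)] leaf_avoids_centres[OF assms(1,2,3)]
      by (meson rtranclp_trans)
  qed
qed

definition vertex :: "nat \<times> nat \<Rightarrow> nat" where
  "vertex = (\<lambda>(i, a). case a of 0 \<Rightarrow> centre i | Suc j \<Rightarrow> leaf i j)"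

lemma vertex_in_verts: "x \<in> grid n \<Longrightarrow> vertex x \<in> verts G"
  using centre_in_verts adj_centre_leaf
  by (auto simp: vertex_def adj_def split: prod.splits nat.splits)

lemma vertex_eq_iff:
  assumes "(i, a) \<in> grid n" "(k, b) \<in> grid n"
  shows "vertex (i, a) = vertex (k, b) \<longleftrightarrow> i = k \<and> a = b"
proof (cases a; cases b)
  assume "a = 0" "b = 0"
  then show ?thesis using centre_eq_iff assms by (auto simp: vertex_def)
next
  fix j assume "a = 0" "b = Suc j"
  then show ?thesis using leaf_ne_centre[of k i j] assms by (auto simp: vertex_def)
next
  fix j assume "a = Suc j" "b = 0"
  then show ?thesis using leaf_ne_centre[of i k j] assms by (auto simp: vertex_def)
next
  fix j j' assume "a = Suc j" "b = Suc j'"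
  then show ?thesis using leaves_apart[of i k j j'] assms by (auto simp: vertex_def)
qed

lemma inj_on_vertex: "inj_on vertex (grid n)"
proof (rule inj_onI)
  fix x y assume "x \<in> grid n" "y \<in> grid n" "vertex x = vertex y"
  then show "x = y" using vertex_eq_iff[of "fst x" "snd x" "fst y" "snd y"] by (simp add: prod_eq_iff)
qed

lemma adj_vertex_iff:
  assumes "(i, a) \<in> grid n" "(k, b) \<in> grid n"
  shows "adj G (vertex (i, a)) (vertex (k, b)) \<longleftrightarrow>
    (i = k \<and> (a = 0) \<noteq> (b = 0)) \<or> (a = 0 \<and> b = 0 \<and> adj G (centre i) (centre k))"
proof (cases a; cases b)
  fix j j' assume "a = Suc j" "b = Suc j'"
  then show ?thesis
    using leaves_apart[of i k j j'] adj_irrefl[OF wf] assms by (auto simp: vertex_def)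
next
  fix j assume "a = 0" "b = Suc j"
  then show ?thesis using adj_centre_leaf_iff[of i k j] assms by (auto simp: vertex_def)
next
  fix j assume "a = Suc j" "b = 0"
  moreover have "adj G (leaf i j) (centre k) \<longleftrightarrow> adj G (centre k) (leaf i j)"
    using adj_sym by blast
  ultimately show ?thesis
    using adj_centre_leaf_iff[of k i j] assms by (auto simp: vertex_def)
qed (simp add: vertex_def)

lemma induced_sub_if_decodes:
  assumes "inj_on d (verts H)" "d ` verts H \<subseteq> grid n"
    and edges_H: "\<And>p q. p \<in> verts H \<Longrightarrow> q \<in> verts H \<Longrightarrow> {p, q} \<in> edges H \<longleftrightarrow>
      (fst (d p) = fst (d q) \<and> (snd (d p) = 0) \<noteq> (snd (d q) = 0)) \<or>
      (snd (d p) = 0 \<and> snd (d q) = 0 \<and> adj G (centre (fst (d p))) (centre (fst (d q))))"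
  shows "induced_sub H G"
  unfolding induced_sub_def
proof (intro exI[of _ "vertex \<circ> d"] conjI ballI)
  show "inj_on (vertex \<circ> d) (verts H)"
    using comp_inj_on[OF assms(1) inj_on_subset[OF inj_on_vertex assms(2)]] .
  show "(vertex \<circ> d) ` verts H \<subseteq> verts G"
    using assms(2) vertex_in_verts unfolding image_subset_iff by simp
  fix p q assume pq: "p \<in> verts H" "q \<in> verts H"
  have "d p \<in> grid n" "d q \<in> grid n" using assms(2) pq by blast+
  moreover obtain i a k b where d: "d p = (i, a)" "d q = (k, b)" by (metis prod.exhaust)
  ultimately have grid: "(i, a) \<in> grid n" "(k, b) \<in> grid n" by (simp_all only:)
  have "{p, q} \<in> edges H \<longleftrightarrow>
      (i = k \<and> (a = 0) \<noteq> (b = 0)) \<or> (a = 0 \<and> b = 0 \<and> adj G (centre i) (centre k))"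
    using edges_H[OF pq] unfolding d fst_conv snd_conv .
  also have "\<dots> \<longleftrightarrow> adj G (vertex (i, a)) (vertex (k, b))"
    using adj_vertex_iff[OF grid] by (rule sym)
  also have "\<dots> \<longleftrightarrow> {vertex (i, a), vertex (k, b)} \<in> edges G"
    using edge_iff_adj[OF vertex_in_verts vertex_in_verts, OF grid] by (rule sym)
  finally show "{p, q} \<in> edges H \<longleftrightarrow> {(vertex \<circ> d) p, (vertex \<circ> d) q} \<in> edges G"
    unfolding comp_def d .
qed

lemma adj_centres_iff:
  assumes "i < n" "k < n"
  shows "adj G (centre i) (centre k) \<longleftrightarrow> i \<noteq> k \<and> {centre i, centre k} \<in> edges G"
  using assms adj_irrefl[OF wf] centre_in_verts edge_iff_adj by metis

lemma stars_induced_sub: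
  assumes "indep (centre ` {..<n}) (edges G)"
  shows "induced_sub (stars n) G"
proof (rule induced_sub_if_decodes)
  show "inj_on (stars_decode n) (verts (stars n))" "stars_decode n ` verts (stars n) \<subseteq> grid n"
    using bij_betw_stars_decode by (auto simp: bij_betw_def)
  have no_adj: "\<not> adj G (centre i) (centre k)" if "i < n" "k < n" for i k
    using assms adj_centres_iff[OF that] centre_eq_iff[OF that] that by (auto simp: indep_def)
  fix p q assume pq: "p \<in> verts (stars n)" "q \<in> verts (stars n)"
  obtain i a k b where d: "stars_decode n p = (i, a)" "stars_decode n q = (k, b)" by (metis prod.exhaust)
  have "(i, a) \<in> grid n" "(k, b) \<in> grid n"
    using stars_decode_in_grid pq unfolding d[symmetric] by blast+
  then show "{p, q} \<in> edges (stars n) \<longleftrightarrow>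
      (fst (stars_decode n p) = fst (stars_decode n q) \<and>
       (snd (stars_decode n p) = 0) \<noteq> (snd (stars_decode n q) = 0)) \<or>
      (snd (stars_decode n p) = 0 \<and> snd (stars_decode n q) = 0 \<and>
       adj G (centre (fst (stars_decode n p))) (centre (fst (stars_decode n q))))"
    using stars_edge_iff[OF pq] no_adj[of i k] unfolding d by auto
qed

lemma Gn_induced_sub:
  assumes "clique (centre ` {..<n}) (edges G)"
  shows "induced_sub (Gn n) G"
proof (rule induced_sub_if_decodes)
  show "inj_on (Gn_decode n) (verts (Gn n))" "Gn_decode n ` verts (Gn n) \<subseteq> grid n"
    using bij_betw_Gn_decode by (auto simp: bij_betw_def)
  have adj: "adj G (centre i) (centre k) \<longleftrightarrow> i \<noteq> k" if "i < n" "k < n" for i k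
    using assms adj_centres_iff[OF that] centre_eq_iff[OF that] that by (auto simp: clique_def)
  fix p q assume pq: "p \<in> verts (Gn n)" "q \<in> verts (Gn n)"
  obtain i a k b where d: "Gn_decode n p = (i, a)" "Gn_decode n q = (k, b)" by (metis prod.exhaust)
  have "(i, a) \<in> grid n" "(k, b) \<in> grid n"
    using Gn_decode_in_grid pq unfolding d[symmetric] by blast+
  then show "{p, q} \<in> edges (Gn n) \<longleftrightarrow>
      (fst (Gn_decode n p) = fst (Gn_decode n q) \<and>
       (snd (Gn_decode n p) = 0) \<noteq> (snd (Gn_decode n q) = 0)) \<or>
      (snd (Gn_decode n p) = 0 \<and> snd (Gn_decode n q) = 0 \<and>
       adj G (centre (fst (Gn_decode n p))) (centre (fst (Gn_decode n q))))"
    using Gn_edge_iff[OF pq] adj[of i k] unfolding d by auto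
qed

end

lemma obtain_separated_stars:
  assumes wf: "wf_graph G" and T: "T \<subseteq> verts G" "finite T" "card T = n"
    and high: "\<And>t. t \<in> T \<Longrightarrow> int (2 * n) \<le> sdeg G t"
  obtains centre leaf where "separated_stars G n centre leaf" "centre ` {..<n} = T"
proof -
  obtain centre where centre: "bij_betw centre {..<n} T"
    using ex_bij_betw_nat_finite[OF T(2)] T(3) by (auto simp: atLeast0LessThan)
  have "\<exists>L. finite L \<and> card L = n \<and> separated_nbrs G t L \<and>
      (\<forall>x\<in>L. \<forall>w\<in>T - {t}. \<not> reachable (del_vertex G t) x w)" if "t \<in> T" for t
  proof -
    have "card (T - {t}) \<le> n" using T(3) by (simp add: card_Diff_singleton_if)
    then have "int (n + card (T - {t})) \<le> sdeg G t" using high[OF that] by linarith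
    moreover have "t \<in> verts G" "finite (T - {t})" using that T by auto
    ultimately obtain L' where "finite L'" "card L' = n" "separated_nbrs G t L'"
      "\<And>x w. x \<in> L' \<Longrightarrow> w \<in> T - {t} \<Longrightarrow> \<not> reachable (del_vertex G t) x w"
      using obtain_separated_nbrs_avoiding[OF wf] by metis
    then show ?thesis by blast
  qed
  then obtain L where L: "\<And>t. t \<in> T \<Longrightarrow> finite (L t) \<and> card (L t) = n \<and> separated_nbrs G t (L t) \<and>
      (\<forall>x\<in>L t. \<forall>w\<in>T - {t}. \<not> reachable (del_vertex G t) x w)"
    by metis
  have "\<exists>f. bij_betw f {..<n} (L (centre i))" if "i < n" for i
    using ex_bij_betw_nat_finite[of "L (centre i)"] L bij_betwE[OF centre] that
    by (auto simp: atLeast0LessThan)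
  then obtain leaf where leaf: "\<And>i. i < n \<Longrightarrow> bij_betw (leaf i) {..<n} (L (centre i))"
    by metis
  have "separated_stars G n centre leaf"
  proof
    fix i k j assume ikj: "i < n" "k < n" "j < n" "i \<noteq> k"
    have "centre k \<in> T - {centre i}"
      using centre ikj by (auto simp: bij_betw_def inj_on_def)
    moreover have "leaf i j \<in> L (centre i)" using leaf[OF ikj(1)] ikj(3) by (auto simp: bij_betw_def)
    ultimately show "\<not> reachable (del_vertex G (centre i)) (leaf i j) (centre k)"
      using L[of "centre i"] bij_betwE[OF centre] ikj(1) by blast
  qed (use wf T centre leaf L bij_betwE[OF centre] in \<open>auto simp: bij_betw_def\<close>)
  then show thesis using that centre by (simp add: bij_betw_def)
qed

section \<open>The two implications\<close>

lemma induced_sub_trans: "induced_sub H1 H2 \<Longrightarrow> induced_sub H2 H3 \<Longrightarrow> induced_sub H1 H3"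
  unfolding induced_sub_def
proof (elim exE conjE)
  fix f g
  assume f: "inj_on f (verts H1)" "f ` verts H1 \<subseteq> verts H2"
     "\<forall>u\<in>verts H1. \<forall>v\<in>verts H1. ({u, v} \<in> edges H1) = ({f u, f v} \<in> edges H2)"
  assume g: "inj_on g (verts H2)" "g ` verts H2 \<subseteq> verts H3"
     "\<forall>u\<in>verts H2. \<forall>v\<in>verts H2. ({u, v} \<in> edges H2) = ({g u, g v} \<in> edges H3)"
  show "\<exists>h. inj_on h (verts H1) \<and> h ` verts H1 \<subseteq> verts H3 \<and>
        (\<forall>u\<in>verts H1. \<forall>v\<in>verts H1. ({u, v} \<in> edges H1) = ({h u, h v} \<in> edges H3))"
    apply (rule exI[of _ "g \<circ> f"])
    using f g by (auto simp: comp_inj_on inj_on_subset image_subset_iff)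
qed

lemma not_H_free_if_induced:
  "H \<in> \<H> \<Longrightarrow> induced_sub H K \<Longrightarrow> induced_sub K G \<Longrightarrow> \<not> H_free \<H> G"
  unfolding H_free_def using induced_sub_trans by blast

lemma fam_le_stars_Gn_if_bounded:
  assumes bounded: "\<And>G. wf_graph G \<Longrightarrow> H_free \<H> G \<Longrightarrow> card {v \<in> verts G. int c1 \<le> sdeg G v} < c2"
  shows "\<exists>n > 0. fam_le \<H> {stars n, Gn n}"
proof (intro exI conjI)
  let ?m = "max c1 c2 + 1"
  have "\<not> H_free \<H> (stars ?m)"
    using bounded[OF wf_stars] many_high_sdeg_stars[of c1 ?m] by fastforce
  moreover have "\<not> H_free \<H> (Gn ?m)"
    using bounded[OF wf_Gn] many_high_sdeg_Gn[of c1 ?m] by fastforce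
  ultimately show "fam_le \<H> {stars ?m, Gn ?m}"
    by (auto simp: fam_le_def H_free_def)
qed simp

lemma bounded_if_fam_le_stars_Gn:
  assumes "fam_le \<H> {stars n, Gn n}"
  shows "\<exists>c1 c2 :: nat. \<forall>G. wf_graph G \<and> H_free \<H> G \<longrightarrow> card {v \<in> verts G. int c1 \<le> sdeg G v} < c2"
proof -
  obtain H1 H2 where H: "H1 \<in> \<H>" "induced_sub H1 (stars n)" "H2 \<in> \<H>" "induced_sub H2 (Gn n)"
    using assms unfolding fam_le_def by blast
  obtain r where r: "\<And>(V :: nat set) E. finite V \<Longrightarrow> r \<le> card V \<Longrightarrow>
      \<exists>R \<subseteq> V. card R = n \<and> clique R E \<or> card R = n \<and> indep R E"
    using ramsey2[of n n] by blast
  have "card {v \<in> verts G. int (2 * n) \<le> sdeg G v} < r" if wf: "wf_graph G" and free: "H_free \<H> G" for G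
  proof (rule ccontr)
    let ?S = "{v \<in> verts G. int (2 * n) \<le> sdeg G v}"
    assume "\<not> card ?S < r"
    moreover have "finite ?S" using wf by (simp add: wf_graph_def)
    ultimately obtain R where R: "R \<subseteq> ?S" "card R = n" "clique R (edges G) \<or> indep R (edges G)"
      using r[of ?S "edges G"] by force
    have RS: "R \<subseteq> verts G" "finite R" "\<And>t. t \<in> R \<Longrightarrow> int (2 * n) \<le> sdeg G t"
      using R(1) finite_subset[OF R(1) \<open>finite ?S\<close>] by auto
    obtain centre leaf where stars: "separated_stars G n centre leaf" "centre ` {..<n} = R"
      using obtain_separated_stars[OF wf RS(1,2) R(2) RS(3)] by blast
    from R(3) show False
    proof
      assume "clique R (edges G)"
      then show False
        using separated_stars.Gn_induced_sub[OF stars(1)] stars(2) not_H_free_if_induced H(3,4) free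
        by blast
    next
      assume "indep R (edges G)"
      then show False
        using separated_stars.stars_induced_sub[OF stars(1)] stars(2) not_H_free_if_induced H(1,2) free
        by blast
    qed
  qed
  then show ?thesis by blast
qed

theorem theorem1p14:
  fixes \<H> :: "graph set"
  assumes "\<forall>H\<in>\<H>. wf_graph H"
  shows "(\<exists>c1 c2 :: nat. \<forall>G. wf_graph G \<and> H_free \<H> G \<longrightarrow>
            card {v \<in> verts G. sdeg G v \<ge> int c1} < c2)
         \<longleftrightarrow> (\<exists>n::nat. n > 0 \<and> fam_le \<H> {stars n, Gn n})"
  using fam_le_stars_Gn_if_bounded bounded_if_fam_le_stars_Gn by blast

end
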